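(* Every weakly-reversible chemical reaction network that has a critical siphon is catalytic.
   Context: A chemical reaction network (CRN) consists of positive integers $s$ (species) and $n$ (complexes), a finite directed graph $G$ with vertex set $\{1,\dots,n\}$ and edge set $E(G)$, and an injective labeling of vertex $i$ by a monic monomial $\psi_i=\prod_{j=1}^s x_j^{y_{ij}}$, $y_i=(y_{i1},\dots,y_{is})\in\mathbb{Z}_{\ge0}^s$. $G$ is weakly-reversible iff each connected component is strongly connected. The stoichiometric subspace $S_G\subseteq\mathbb{R}^s$ is the span of $\{y_i-y_j : (i,j)\in E(G)\}$; for $x\in\mathbb{R}^s_{\ge0}$ the invariant polyhedron containing $x$ is $(x+S_G)\cap\mathbb{R}^s_{\ge0}$. A nonempty $Z\subseteq\{1,\dots,s\}$ is a siphon iff for every $(i,j)\in E(G)$, if $x_k\mid\psi_j$ for some $k\in Z$ then $x_l\mid\psi_i$ for some $l\in Z$. A siphon $Z$ is critical iff there is $z\in\mathbb{R}^s_{\ge0}$ with $Z=\{i : z_i=0\}$ such that the invariant polyhedron containing $z$ meets $\mathbb{R}^s_{>0}$. The event-graph $\overline{G}$ has as vertices all monic monomials in $x_1,\dots,x_s$, with an edge $(N\psi_i,N\psi_j)$ for each $(i,j)\in E(G)$ and each monic monomial $N$. A weakly-reversible CRN is catalytic iff there exist monic monomials $M,N$ path-connected in $\overline{G}$ such that $M/\gcd(M,N)$ and $N/\gcd(M,N)$ are not path-connected in $\overline{G}$. *)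

theory Defs
  imports Complex_Main
begin

text \<open>A CRN with species 1..s and complexes 1..n. Complex i is labelled by the
monomial with exponent vector y i (a function nat => nat, supported on 1..s).  Monic monomials in x_1..x_s are represented by
their exponent vectors: functions nat => nat vanishing outside 1..s.\<close>

definition monomials :: "nat \<Rightarrow> (nat \<Rightarrow> nat) set" where
  "monomials s = {a. \<forall>k. k \<notin> {1..s} \<longrightarrow> a k = 0}"

definition is_crn :: "nat \<Rightarrow> nat \<Rightarrow> (nat \<Rightarrow> nat \<Rightarrow> nat) \<Rightarrow> (nat \<times> nat) set \<Rightarrow> bool" where
  "is_crn s n y E \<longleftrightarrow> 0 < s \<and> 0 < n \<and> E \<subseteq> {1..n} \<times> {1..n}
     \<and> (\<forall>i\<in>{1..n}. y i \<in> monomials s) \<and> inj_on y {1..n}"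

text \<open>Weakly reversible: every connected component (w.r.t. the underlying undirected
graph) is strongly connected.\<close>
definition weakly_reversible :: "nat \<Rightarrow> (nat \<times> nat) set \<Rightarrow> bool" where
  "weakly_reversible n E \<longleftrightarrow>
     (\<forall>i\<in>{1..n}. \<forall>j\<in>{1..n}. (i, j) \<in> (E \<union> E\<inverse>)\<^sup>* \<longrightarrow> (i, j) \<in> E\<^sup>*)"

text \<open>Stoichiometric subspace: the real span of {y_i - y_j : (i,j) in E}, E finite,
vectors in R^s represented as functions nat => real (coordinates 1..s).\<close>
definition stoich_subspace :: "nat \<Rightarrow> (nat \<Rightarrow> nat \<Rightarrow> nat) \<Rightarrow> (nat \<times> nat) set \<Rightarrow> (nat \<Rightarrow> real) set" where
  "stoich_subspace s y E = {v. \<exists>c :: nat \<times> nat \<Rightarrow> real.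
      \<forall>k\<in>{1..s}. v k = (\<Sum>e\<in>E. c e * (real (y (fst e) k) - real (y (snd e) k)))}"

definition siphon :: "nat \<Rightarrow> (nat \<Rightarrow> nat \<Rightarrow> nat) \<Rightarrow> (nat \<times> nat) set \<Rightarrow> nat set \<Rightarrow> bool" where
  "siphon s y E Z \<longleftrightarrow> Z \<noteq> {} \<and> Z \<subseteq> {1..s} \<and>
     (\<forall>(i, j)\<in>E. (\<exists>k\<in>Z. 0 < y j k) \<longrightarrow> (\<exists>l\<in>Z. 0 < y i l))"

definition critical_siphon :: "nat \<Rightarrow> (nat \<Rightarrow> nat \<Rightarrow> nat) \<Rightarrow> (nat \<times> nat) set \<Rightarrow> nat set \<Rightarrow> bool" where
  "critical_siphon s y E Z \<longleftrightarrow> siphon s y E Z \<and>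
     (\<exists>z :: nat \<Rightarrow> real. (\<forall>k\<in>{1..s}. 0 \<le> z k) \<and> Z = {k\<in>{1..s}. z k = 0} \<and>
        (\<exists>v\<in>stoich_subspace s y E. \<forall>k\<in>{1..s}. 0 < z k + v k))"

definition event_edges :: "nat \<Rightarrow> (nat \<Rightarrow> nat \<Rightarrow> nat) \<Rightarrow> (nat \<times> nat) set \<Rightarrow> ((nat \<Rightarrow> nat) \<times> (nat \<Rightarrow> nat)) set" where
  "event_edges s y E = {((\<lambda>k. N k + y i k), (\<lambda>k. N k + y j k)) | N i j. N \<in> monomials s \<and> (i, j) \<in> E}"

definition event_connected :: "nat \<Rightarrow> (nat \<Rightarrow> nat \<Rightarrow> nat) \<Rightarrow> (nat \<times> nat) set \<Rightarrow> (nat \<Rightarrow> nat) \<Rightarrow> (nat \<Rightarrow> nat) \<Rightarrow> bool" where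
  "event_connected s y E M N \<longleftrightarrow>
     (M, N) \<in> (event_edges s y E \<union> (event_edges s y E)\<inverse>)\<^sup>*"

definition catalytic :: "nat \<Rightarrow> (nat \<Rightarrow> nat \<Rightarrow> nat) \<Rightarrow> (nat \<times> nat) set \<Rightarrow> bool" where
  "catalytic s y E \<longleftrightarrow> (\<exists>M\<in>monomials s. \<exists>N\<in>monomials s.
      event_connected s y E M N \<and>
      \<not> event_connected s y E (\<lambda>k. M k - min (M k) (N k)) (\<lambda>k. N k - min (M k) (N k)))"

end

theory Submission
  imports Defs
begin

text \<open>A critical siphon Z gives a vector v of the stoichiometric subspace that is positive on Z
(z vanishes on Z while z + v is positive). Scaling and rounding its coefficients yields an integer
combination of reaction vectors that is still positive on Z, and such a combination is the
difference N - M of two monomials connected in the event graph. After cancelling gcd(M, N), the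
monomial M/gcd vanishes on Z while N/gcd does not. In a weakly-reversible network every reaction
lies on a cycle, so by the siphon property its reactant meets Z iff its product does; hence
"some variable of Z occurs" is invariant along event edges and M/gcd, N/gcd are not connected.\<close>

definition touches :: "nat set \<Rightarrow> (nat \<Rightarrow> nat) \<Rightarrow> bool" where
  "touches Z M \<longleftrightarrow> (\<exists>k\<in>Z. 0 < M k)"

lemma event_connected_refl: "event_connected s y E M M"
  unfolding event_connected_def by simp

lemma event_connected_trans [trans]:
  "event_connected s y E M N \<Longrightarrow> event_connected s y E N P \<Longrightarrow> event_connected s y E M P"
  unfolding event_connected_def by (rule rtrancl_trans)

lemma event_connected_sym: "event_connected s y E M N \<Longrightarrow> event_connected s y E N M"
  unfolding event_connected_def
  using rtrancl_converseI[of M N "event_edges s y E \<union> (event_edges s y E)\<inverse>"]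
  by (simp add: converse_Un Un_commute)

lemma event_connected_edge:
  "N \<in> monomials s \<Longrightarrow> (i, j) \<in> E \<Longrightarrow>
   event_connected s y E (\<lambda>k. N k + y i k) (\<lambda>k. N k + y j k)"
  unfolding event_connected_def event_edges_def by (rule r_into_rtrancl) blast

lemma monomials_add: "M \<in> monomials s \<Longrightarrow> N \<in> monomials s \<Longrightarrow> (\<lambda>k. M k + N k) \<in> monomials s"
  by (simp add: monomials_def)

lemma monomials_sum: "(\<And>e. e \<in> F \<Longrightarrow> A e \<in> monomials s) \<Longrightarrow> (\<lambda>k. \<Sum>e\<in>F. A e k) \<in> monomials s"
  by (auto simp: monomials_def)

lemma event_edges_shift:
  assumes "(M, N) \<in> event_edges s y E" "C \<in> monomials s"
  shows "((\<lambda>k. M k + C k), (\<lambda>k. N k + C k)) \<in> event_edges s y E"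
proof -
  obtain P i j where "P \<in> monomials s" "(i, j) \<in> E"
    and MN: "M = (\<lambda>k. P k + y i k)" "N = (\<lambda>k. P k + y j k)"
    using assms(1) by (auto simp: event_edges_def)
  moreover have "(\<lambda>k. P k + C k) \<in> monomials s"
    using \<open>P \<in> monomials s\<close> assms(2) by (rule monomials_add)
  ultimately show ?thesis
    unfolding event_edges_def mem_Collect_eq
    by (intro exI[of _ "\<lambda>k. P k + C k"] exI[of _ i] exI[of _ j]) (auto simp: ac_simps)
qed

lemma event_connected_shift:
  assumes "event_connected s y E M N" "C \<in> monomials s"
  shows "event_connected s y E (\<lambda>k. M k + C k) (\<lambda>k. N k + C k)"
  using assms(1) unfolding event_connected_def
proof (induction rule: rtrancl_induct)
  case base
  show ?case by simp
next
  case (step P Q)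
  then have "((\<lambda>k. P k + C k), (\<lambda>k. Q k + C k)) \<in> event_edges s y E \<union> (event_edges s y E)\<inverse>"
    using event_edges_shift[OF _ assms(2)] by auto
  with step.IH show ?case by (rule rtrancl_into_rtrancl)
qed

lemma event_connected_add:
  assumes "event_connected s y E A B" "event_connected s y E C D"
    and "B \<in> monomials s" "C \<in> monomials s"
  shows "event_connected s y E (\<lambda>k. A k + C k) (\<lambda>k. B k + D k)"
proof -
  have "event_connected s y E (\<lambda>k. C k + B k) (\<lambda>k. D k + B k)"
    using assms(2,3) by (rule event_connected_shift)
  then have "event_connected s y E (\<lambda>k. B k + C k) (\<lambda>k. B k + D k)"
    by (simp add: add.commute)
  with event_connected_shift[OF assms(1,4)] show ?thesis
    by (rule event_connected_trans)
qed

lemma event_connected_sum: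
  assumes "finite F" "\<And>e. e \<in> F \<Longrightarrow> event_connected s y E (A e) (B e)"
    and "\<And>e. e \<in> F \<Longrightarrow> A e \<in> monomials s \<and> B e \<in> monomials s"
  shows "event_connected s y E (\<lambda>k. \<Sum>e\<in>F. A e k) (\<lambda>k. \<Sum>e\<in>F. B e k)"
  using assms
proof (induction F rule: finite_induct)
  case empty
  show ?case by (simp add: event_connected_refl)
next
  case (insert x F)
  have "event_connected s y E (\<lambda>k. A x k + (\<Sum>e\<in>F. A e k)) (\<lambda>k. B x k + (\<Sum>e\<in>F. B e k))"
    using insert by (intro event_connected_add monomials_sum) auto
  with insert.hyps show ?case by simp
qed

lemma event_connected_edge_multiple:
  assumes "(i, j) \<in> E" "y i \<in> monomials s" "y j \<in> monomials s"
  shows "event_connected s y E (\<lambda>k. t * y i k) (\<lambda>k. t * y j k)"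
proof (induction t)
  case 0
  show ?case by (simp add: event_connected_refl)
next
  case (Suc t)
  have "(\<lambda>k. t * y i k) \<in> monomials s"
    using assms(2) by (simp add: monomials_def)
  then have "event_connected s y E (\<lambda>k. t * y i k + y i k) (\<lambda>k. t * y i k + y j k)"
    using assms(1) by (rule event_connected_edge)
  also have "event_connected s y E \<dots> (\<lambda>k. t * y j k + y j k)"
    using Suc.IH assms(3) by (rule event_connected_shift)
  finally show ?case by (simp add: add.commute)
qed

text \<open>Split each coefficient by sign and take the corresponding multiples of reactant and product.\<close>

lemma event_connected_integer_combination:
  fixes d :: "nat \<times> nat \<Rightarrow> int"
  assumes "finite E" and mono: "\<And>e. e \<in> E \<Longrightarrow> y (fst e) \<in> monomials s \<and> y (snd e) \<in> monomials s"
  obtains M N where "M \<in> monomials s" "N \<in> monomials s" "event_connected s y E M N"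
    "\<forall>k. real (N k) - real (M k) = (\<Sum>e\<in>E. of_int (d e) * (real (y (fst e) k) - real (y (snd e) k)))"
proof
  define A where "A e = (\<lambda>k. nat \<bar>d e\<bar> * (if 0 \<le> d e then y (snd e) k else y (fst e) k))" for e
  define B where "B e = (\<lambda>k. nat \<bar>d e\<bar> * (if 0 \<le> d e then y (fst e) k else y (snd e) k))" for e
  have AB_mono: "A e \<in> monomials s \<and> B e \<in> monomials s" if "e \<in> E" for e
    using mono[OF that] by (auto simp: A_def B_def monomials_def)
  show "(\<lambda>k. \<Sum>e\<in>E. A e k) \<in> monomials s" "(\<lambda>k. \<Sum>e\<in>E. B e k) \<in> monomials s"
    using AB_mono by (auto intro!: monomials_sum)
  have "event_connected s y E (A e) (B e)" if "e \<in> E" for e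
  proof -
    obtain i j where e: "e = (i, j)" by (cases e)
    have "event_connected s y E (\<lambda>k. nat \<bar>d e\<bar> * y i k) (\<lambda>k. nat \<bar>d e\<bar> * y j k)"
      using that mono[OF that] e by (intro event_connected_edge_multiple) auto
    then show ?thesis
      using e by (cases "0 \<le> d e") (auto simp: A_def B_def dest: event_connected_sym)
  qed
  then show "event_connected s y E (\<lambda>k. \<Sum>e\<in>E. A e k) (\<lambda>k. \<Sum>e\<in>E. B e k)"
    using AB_mono by (rule event_connected_sum[OF assms(1)])
  have "real (B e k) - real (A e k) = of_int (d e) * (real (y (fst e) k) - real (y (snd e) k))" for e k
    by (cases "0 \<le> d e") (auto simp: A_def B_def algebra_simps)
  then show "\<forall>k. real (\<Sum>e\<in>E. B e k) - real (\<Sum>e\<in>E. A e k)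
      = (\<Sum>e\<in>E. of_int (d e) * (real (y (fst e) k) - real (y (snd e) k)))"
    by (simp add: sum_subtractf[symmetric])
qed

text \<open>Scale by K and round down: each of the finitely many coordinates moves by at most
B k = \<Sum>|a e k|, which K * v k exceeds for K large.\<close>

lemma integer_combination_positive:
  fixes a :: "'e \<Rightarrow> 'k \<Rightarrow> real"
  assumes "finite E" "finite Z" and pos: "\<forall>k\<in>Z. 0 < (\<Sum>e\<in>E. c e * a e k)"
  obtains d :: "'e \<Rightarrow> int" where "\<forall>k\<in>Z. 0 < (\<Sum>e\<in>E. of_int (d e) * a e k)"
proof -
  define v where "v k = (\<Sum>e\<in>E. c e * a e k)" for k
  define B where "B k = (\<Sum>e\<in>E. \<bar>a e k\<bar>)" for k
  obtain K :: nat where K: "(\<Sum>k\<in>Z. B k / v k) < real K"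
    using reals_Archimedean2 by blast
  have "0 < (\<Sum>e\<in>E. of_int \<lfloor>real K * c e\<rfloor> * a e k)" if k: "k \<in> Z" for k
  proof -
    have "0 < v k" using pos k by (simp add: v_def)
    have "B k / v k \<le> (\<Sum>k\<in>Z. B k / v k)"
      using k assms(2) pos
      by (intro member_le_sum) (auto simp: B_def v_def intro!: divide_nonneg_pos sum_nonneg)
    with K have "B k / v k < real K"
      by linarith
    with \<open>0 < v k\<close> have "B k < real K * v k"
      by (simp add: pos_divide_less_eq)
    have round: "real K * c e * a e k - \<bar>a e k\<bar> \<le> of_int \<lfloor>real K * c e\<rfloor> * a e k" for e
    proof -
      define t where "t = of_int \<lfloor>real K * c e\<rfloor> - real K * c e"
      have "\<bar>t\<bar> \<le> 1"
        unfolding t_def by (smt (verit) of_int_floor_le real_of_int_floor_gt_diff_one)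
      then have "\<bar>t * a e k\<bar> \<le> \<bar>a e k\<bar>"
        by (simp add: abs_mult mult_left_le_one_le)
      moreover have "of_int \<lfloor>real K * c e\<rfloor> * a e k = real K * c e * a e k + t * a e k"
        unfolding t_def by (simp add: algebra_simps)
      ultimately show ?thesis by linarith
    qed
    have "real K * v k - B k = (\<Sum>e\<in>E. real K * c e * a e k - \<bar>a e k\<bar>)"
      by (simp add: v_def B_def sum_subtractf sum_distrib_left mult.assoc)
    also have "\<dots> \<le> (\<Sum>e\<in>E. of_int \<lfloor>real K * c e\<rfloor> * a e k)"
      by (rule sum_mono) (rule round)
    finally show ?thesis
      using \<open>B k < real K * v k\<close> by linarith
  qed
  then show ?thesis
    using that[of "\<lambda>e. \<lfloor>real K * c e\<rfloor>"] by blast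
qed

lemma siphon_reachable_touches:
  assumes "siphon s y E Z" "(i, j) \<in> E\<^sup>*" "touches Z (y j)"
  shows "touches Z (y i)"
  using assms(2,3)
  by (induction rule: converse_rtrancl_induct)
    (use assms(1) in \<open>auto simp: siphon_def touches_def\<close>)

lemma weakly_reversible_siphon_edge_touches:
  assumes "is_crn s n y E" "weakly_reversible n E" "siphon s y E Z" "(i, j) \<in> E"
  shows "touches Z (y i) \<longleftrightarrow> touches Z (y j)"
proof -
  have "i \<in> {1..n}" "j \<in> {1..n}"
    using assms(1,4) by (auto simp: is_crn_def)
  moreover have "(j, i) \<in> (E \<union> E\<inverse>)\<^sup>*"
    using assms(4) by auto
  ultimately have "(j, i) \<in> E\<^sup>*"
    using assms(2) by (auto simp: weakly_reversible_def)
  then show ?thesis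
    using assms(3,4) siphon_reachable_touches[of s y E Z] by blast
qed

lemma event_connected_touches:
  assumes "event_connected s y E M N"
    and edge: "\<And>i j. (i, j) \<in> E \<Longrightarrow> touches Z (y i) \<longleftrightarrow> touches Z (y j)"
  shows "touches Z M \<longleftrightarrow> touches Z N"
  using assms(1) unfolding event_connected_def
proof (induction rule: rtrancl_induct)
  case base
  show ?case ..
next
  case (step P Q)
  obtain R i j where "(i, j) \<in> E"
    and "(P = (\<lambda>k. R k + y i k) \<and> Q = (\<lambda>k. R k + y j k)) \<or>
         (Q = (\<lambda>k. R k + y i k) \<and> P = (\<lambda>k. R k + y j k))"
    using step.hyps(2) by (auto simp: event_edges_def)
  with edge[of i j] have "touches Z P \<longleftrightarrow> touches Z Q"
    by (auto simp: touches_def)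
  with step.IH show ?case by simp
qed

lemma critical_siphon_stoich_positive:
  assumes "critical_siphon s y E Z"
  obtains c where "\<forall>k\<in>Z. 0 < (\<Sum>e\<in>E. c e * (real (y (fst e) k) - real (y (snd e) k)))"
proof -
  obtain z v where Z_zeros: "Z = {k\<in>{1..s}. z k = 0}"
    and "v \<in> stoich_subspace s y E" and zv: "\<forall>k\<in>{1..s}. 0 < z k + v k"
    using assms by (auto simp: critical_siphon_def)
  then obtain c where v: "\<forall>k\<in>{1..s}. v k = (\<Sum>e\<in>E. c e * (real (y (fst e) k) - real (y (snd e) k)))"
    by (auto simp: stoich_subspace_def)
  have "\<forall>k\<in>Z. 0 < (\<Sum>e\<in>E. c e * (real (y (fst e) k) - real (y (snd e) k)))"
    using Z_zeros zv v by force
  then show ?thesis by (rule that)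
qed

lemma critical_siphon_connected_dominating:
  assumes "is_crn s n y E" "critical_siphon s y E Z"
  obtains M N where "M \<in> monomials s" "N \<in> monomials s" "event_connected s y E M N"
    "\<forall>k\<in>Z. M k < N k"
proof -
  have "finite Z"
    using assms(2) by (auto simp: critical_siphon_def siphon_def intro: finite_subset)
  have E: "finite E" "\<And>e. e \<in> E \<Longrightarrow> y (fst e) \<in> monomials s \<and> y (snd e) \<in> monomials s"
    using assms(1) finite_subset[of E "{1..n} \<times> {1..n}"] by (auto simp: is_crn_def)
  obtain c where c: "\<forall>k\<in>Z. 0 < (\<Sum>e\<in>E. c e * (real (y (fst e) k) - real (y (snd e) k)))"
    using assms(2) by (rule critical_siphon_stoich_positive)
  obtain d where d: "\<forall>k\<in>Z. 0 < (\<Sum>e\<in>E. of_int (d e) * (real (y (fst e) k) - real (y (snd e) k)))"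
    using integer_combination_positive[OF \<open>finite E\<close> \<open>finite Z\<close> c] .
  obtain M N where "M \<in> monomials s" "N \<in> monomials s" "event_connected s y E M N"
    and "\<forall>k. real (N k) - real (M k)
      = (\<Sum>e\<in>E. of_int (d e) * (real (y (fst e) k) - real (y (snd e) k)))"
    using E by (rule event_connected_integer_combination)
  with d show ?thesis
    by (metis that diff_gt_0_iff_gt of_nat_less_iff)
qed

lemma weakly_reversible_cancelled_not_connected:
  assumes "is_crn s n y E" "weakly_reversible n E" "siphon s y E Z" "\<forall>k\<in>Z. M k < N k"
  shows "\<not> event_connected s y E (\<lambda>k. M k - min (M k) (N k)) (\<lambda>k. N k - min (M k) (N k))"
proof
  assume "event_connected s y E (\<lambda>k. M k - min (M k) (N k)) (\<lambda>k. N k - min (M k) (N k))"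
  then have "touches Z (\<lambda>k. M k - min (M k) (N k)) \<longleftrightarrow> touches Z (\<lambda>k. N k - min (M k) (N k))"
    using weakly_reversible_siphon_edge_touches[OF assms(1-3)] by (rule event_connected_touches)
  moreover obtain k where "k \<in> Z"
    using assms(3) by (auto simp: siphon_def)
  ultimately show False
    using assms(4) by (auto simp: touches_def)
qed

theorem theorem4p1:
  fixes s n :: nat and y :: "nat \<Rightarrow> nat \<Rightarrow> nat" and E :: "(nat \<times> nat) set"
  assumes "is_crn s n y E"
    and "weakly_reversible n E"
    and "\<exists>Z. critical_siphon s y E Z"
  shows "catalytic s y E"
proof -
  obtain Z where Z: "critical_siphon s y E Z"
    using assms(3) by blast
  obtain M N where "M \<in> monomials s" "N \<in> monomials s" "event_connected s y E M N"
    and "\<forall>k\<in>Z. M k < N k"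
    using assms(1) Z by (rule critical_siphon_connected_dominating)
  moreover have "siphon s y E Z"
    using Z by (simp add: critical_siphon_def)
  ultimately show ?thesis
    unfolding catalytic_def using weakly_reversible_cancelled_not_connected[OF assms(1,2)] by blast
qed

end
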